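(* For every even positive integer $k$ there exists a connected graph $G$ with exactly $k$ basis forced vertices and $|E(G)|=\frac{n(n-1)}{2}-2k$, where $n=|V(G)|$.
   Context: All graphs are finite and simple. For vertices $u,v$ of a connected graph $G$, $d(u,v)$ is the length of a shortest $u$–$v$ path. A set $R\subseteq V(G)$ is a resolving set if for all distinct $x,y\in V(G)$ there is $r\in R$ with $d(r,x)\neq d(r,y)$. The metric dimension $\dim(G)$ is the minimum cardinality of a resolving set, and a resolving set of cardinality $\dim(G)$ is a metric basis. A vertex is a basis forced vertex if it belongs to every metric basis of $G$. *)

theory Defs
  imports Main
begin

definition simple_graph :: "'a set \<Rightarrow> 'a set set \<Rightarrow> bool" where
  "simple_graph V E \<longleftrightarrow> finite V \<and> (\<forall>e\<in>E. e \<subseteq> V \<and> card e = 2)"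

definition is_walk :: "'a set \<Rightarrow> 'a set set \<Rightarrow> 'a list \<Rightarrow> bool" where
  "is_walk V E xs \<longleftrightarrow> xs \<noteq> [] \<and> set xs \<subseteq> V \<and>
     (\<forall>i. Suc i < length xs \<longrightarrow> {xs ! i, xs ! Suc i} \<in> E)"

definition walk_of_len :: "'a set \<Rightarrow> 'a set set \<Rightarrow> 'a \<Rightarrow> 'a \<Rightarrow> nat \<Rightarrow> bool" where
  "walk_of_len V E u v k \<longleftrightarrow>
     (\<exists>xs. is_walk V E xs \<and> hd xs = u \<and> last xs = v \<and> length xs = Suc k)"

definition connected_graph :: "'a set \<Rightarrow> 'a set set \<Rightarrow> bool" where
  "connected_graph V E \<longleftrightarrow> V \<noteq> {} \<and> (\<forall>u\<in>V. \<forall>v\<in>V. \<exists>k. walk_of_len V E u v k)"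

definition gdist :: "'a set \<Rightarrow> 'a set set \<Rightarrow> 'a \<Rightarrow> 'a \<Rightarrow> nat" where
  "gdist V E u v = (LEAST k. walk_of_len V E u v k)"

definition resolving_set :: "'a set \<Rightarrow> 'a set set \<Rightarrow> 'a set \<Rightarrow> bool" where
  "resolving_set V E R \<longleftrightarrow> R \<subseteq> V \<and>
     (\<forall>x\<in>V. \<forall>y\<in>V. x \<noteq> y \<longrightarrow> (\<exists>r\<in>R. gdist V E r x \<noteq> gdist V E r y))"

definition metric_dim :: "'a set \<Rightarrow> 'a set set \<Rightarrow> nat" where
  "metric_dim V E = (LEAST k. \<exists>R. resolving_set V E R \<and> card R = k)"

definition metric_basis :: "'a set \<Rightarrow> 'a set set \<Rightarrow> 'a set \<Rightarrow> bool" where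
  "metric_basis V E R \<longleftrightarrow> resolving_set V E R \<and> card R = metric_dim V E"

definition basis_forced :: "'a set \<Rightarrow> 'a set set \<Rightarrow> 'a \<Rightarrow> bool" where
  "basis_forced V E v \<longleftrightarrow> v \<in> V \<and> (\<forall>R. metric_basis V E R \<longrightarrow> v \<in> R)"

end

theory Submission
  imports Defs
begin

(* Let H be the disjoint union of m = k/2 paths a1 a2 a3 a4 a5 and one isolated vertex c, and
   let G be its complement. In G the vertex c is adjacent to everything, so distances are 0, 1
   (non-adjacent in H) or 2 (adjacent in H): a set R resolves G iff every pair x, y either meets R
   or is told apart by a vertex of R that is an H-neighbour of exactly one of them. Applied to the
   pairs inside one path this forces |R \<inter> {a1,...,a5}| \<ge> 2, and when equality holds throughout
   (so that c \<notin> R) it forces R \<inter> {a1,...,a5} = {a2, a4}. The vertices a2, a4 of all paths do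
   resolve G, so they form its unique metric basis and all k of them are forced; G misses exactly
   the 4m = 2k edges of H from the complete graph. *)

lemma walk_of_len_0_iff: "walk_of_len V E u v 0 \<longleftrightarrow> u \<in> V \<and> u = v"
  unfolding walk_of_len_def is_walk_def
  by (auto simp: length_Suc_conv intro!: exI[of _ "[u]"])

lemma walk_of_len_1_iff: "walk_of_len V E u v 1 \<longleftrightarrow> u \<in> V \<and> v \<in> V \<and> {u,v} \<in> E"
proof
  assume "walk_of_len V E u v 1"
  then obtain xs where xs: "is_walk V E xs" "hd xs = u" "last xs = v" "length xs = 2"
    unfolding walk_of_len_def by auto
  then obtain a b where "xs = [a,b]"
    by (auto simp: length_Suc_conv numeral_2_eq_2)
  with xs show "u \<in> V \<and> v \<in> V \<and> {u,v} \<in> E"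
    unfolding is_walk_def by auto
next
  assume "u \<in> V \<and> v \<in> V \<and> {u,v} \<in> E"
  then show "walk_of_len V E u v 1"
    unfolding walk_of_len_def is_walk_def
    by (intro exI[of _ "[u,v]"]) (auto simp: less_Suc_eq)
qed

lemma walk_of_len_2I:
  assumes "u \<in> V" "w \<in> V" "v \<in> V" "{u,w} \<in> E" "{w,v} \<in> E"
  shows "walk_of_len V E u v 2"
  unfolding walk_of_len_def is_walk_def
  by (intro exI[of _ "[u,w,v]"]) (use assms in \<open>auto simp: less_Suc_eq numeral_2_eq_2\<close>)

lemma walk_of_len_2_dominating_vertex:
  assumes "c \<in> V" and dom: "\<And>v. v \<in> V \<Longrightarrow> v \<noteq> c \<Longrightarrow> {c,v} \<in> E"
    and "u \<in> V" "v \<in> V" "u \<noteq> v" "{u,v} \<notin> E"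
  shows "walk_of_len V E u v 2"
proof -
  have "u \<noteq> c"
    using dom[of v] assms by blast
  moreover have "v \<noteq> c"
    using dom[of u] assms by (auto simp: insert_commute)
  ultimately have "{c,u} \<in> E" "{c,v} \<in> E"
    using dom assms by auto
  moreover have "{u,c} = {c,u}"
    by blast
  ultimately show ?thesis
    using assms by (intro walk_of_len_2I[of u V c]) simp_all
qed

lemma gdist_dominating_vertex:
  assumes "c \<in> V" and "\<And>v. v \<in> V \<Longrightarrow> v \<noteq> c \<Longrightarrow> {c,v} \<in> E"
    and uv: "u \<in> V" "v \<in> V"
  shows "gdist V E u v = (if u = v then 0 else if {u,v} \<in> E then 1 else 2)"
proof (cases "u = v")
  case True
  then show ?thesis
    using uv by (simp add: gdist_def walk_of_len_0_iff)
next
  case False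
  then have no_walk_0: "\<not> walk_of_len V E u v 0"
    by (simp add: walk_of_len_0_iff)
  show ?thesis
  proof (cases "{u,v} \<in> E")
    case True
    have "(LEAST k. walk_of_len V E u v k) = 1"
    proof (rule Least_equality)
      show "walk_of_len V E u v 1"
        using True uv by (simp only: walk_of_len_1_iff)
    qed (use no_walk_0 in \<open>metis less_one not_less\<close>)
    then show ?thesis
      using False True by (simp add: gdist_def)
  next
    case no_edge: False
    have "(LEAST k. walk_of_len V E u v k) = 2"
    proof (rule Least_equality)
      show "walk_of_len V E u v 2"
        using assms False no_edge by (rule walk_of_len_2_dominating_vertex)
    next
      fix k assume "walk_of_len V E u v k"
      moreover have "\<not> walk_of_len V E u v 1"
        using no_edge by (simp only: walk_of_len_1_iff) simp
      ultimately show "2 \<le> k"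
        using no_walk_0 by (metis less_2_cases not_le One_nat_def)
    qed
    then show ?thesis
      using False no_edge by (simp add: gdist_def)
  qed
qed

lemma connected_graph_dominating_vertex:
  assumes "c \<in> V" and "\<And>v. v \<in> V \<Longrightarrow> v \<noteq> c \<Longrightarrow> {c,v} \<in> E"
  shows "connected_graph V E"
  unfolding connected_graph_def
proof (intro conjI ballI)
  show "V \<noteq> {}"
    using \<open>c \<in> V\<close> by blast
  fix u v assume uv: "u \<in> V" "v \<in> V"
  consider "u = v" | "{u,v} \<in> E" | "u \<noteq> v" "{u,v} \<notin> E"
    by auto
  then show "\<exists>k. walk_of_len V E u v k"
  proof cases
    case 1
    then show ?thesis
      using uv by (intro exI[of _ 0]) (simp add: walk_of_len_0_iff)
  next
    case 2
    then show ?thesis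
      using uv by (intro exI[of _ 1]) (simp only: walk_of_len_1_iff)
  next
    case 3
    then show ?thesis
      using uv by (intro exI[of _ 2] walk_of_len_2_dominating_vertex[OF assms])
  qed
qed

lemma resolving_set_dominating_vertex:
  assumes "c \<in> V" and "\<And>v. v \<in> V \<Longrightarrow> v \<noteq> c \<Longrightarrow> {c,v} \<in> E"
  shows "resolving_set V E R \<longleftrightarrow> R \<subseteq> V \<and>
    (\<forall>x\<in>V. \<forall>y\<in>V. x \<noteq> y \<longrightarrow> (\<exists>r\<in>R. r = x \<or> r = y \<or> ({r,x} \<in> E) \<noteq> ({r,y} \<in> E)))"
  unfolding resolving_set_def
proof (intro conj_cong refl ball_cong imp_cong bex_cong)
  fix x y r assume "R \<subseteq> V" "x \<in> V" "y \<in> V" "x \<noteq> y" "r \<in> R"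
  then have "r \<in> V"
    by blast
  with \<open>x \<in> V\<close> \<open>y \<in> V\<close> \<open>x \<noteq> y\<close>
  show "gdist V E r x \<noteq> gdist V E r y \<longleftrightarrow> r = x \<or> r = y \<or> ({r,x} \<in> E) \<noteq> ({r,y} \<in> E)"
    by (simp add: gdist_dominating_vertex[OF assms])
qed

lemma finite_resolving_set: "finite V \<Longrightarrow> resolving_set V E R \<Longrightarrow> finite R"
  unfolding resolving_set_def by (blast intro: finite_subset)

lemma card_Int_consecutive_blocks:
  fixes R :: "nat set"
  shows "card (R \<inter> {1..b*m}) = (\<Sum>i<m. card (R \<inter> {b*i+1..b*i+b}))"
proof (induction m)
  case 0
  then show ?case by simp
next
  case (Suc m)
  have "{1..b * Suc m} = {1..b*m} \<union> {b*m+1..b*m+b}"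
    by auto
  then have "R \<inter> {1..b * Suc m} = (R \<inter> {1..b*m}) \<union> (R \<inter> {b*m+1..b*m+b})"
    by blast
  then show ?case
    using Suc by (simp add: card_Un_disjoint disjoint_iff)
qed

lemma card_residues_below:
  fixes P :: "nat \<Rightarrow> bool"
  shows "card {x. x < b*m \<and> P (x mod b)} = m * card {j. j < b \<and> P j}"
proof (induction m)
  case 0
  then show ?case by simp
next
  case (Suc m)
  have "{x. x < b * Suc m \<and> P (x mod b)} =
      {x. x < b*m \<and> P (x mod b)} \<union> (+) (b*m) ` {j. j < b \<and> P j}"
  proof (intro equalityI subsetI)
    fix x assume x: "x \<in> {x. x < b * Suc m \<and> P (x mod b)}"
    show "x \<in> {x. x < b*m \<and> P (x mod b)} \<union> (+) (b*m) ` {j. j < b \<and> P j}"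
    proof (cases "x < b*m")
      case False
      define j where "j = x - b*m"
      have "x = b*m + j" "j < b"
        using False x by (auto simp: j_def)
      then show ?thesis
        using x by auto
    qed (use x in auto)
  qed auto
  moreover have "card ((+) (b*m) ` {j. j < b \<and> P j}) = card {j. j < b \<and> P j}"
    by (rule card_image) simp
  moreover have "{x. x < b*m \<and> P (x mod b)} \<inter> (+) (b*m) ` {j. j < b \<and> P j} = {}"
    by auto
  ultimately show ?case
    using Suc by (simp add: card_Un_disjoint)
qed

(* The construction: on the vertices 0, ..., 5m take all edges except those of the paths
   5i+1 - 5i+2 - ... - 5i+5 for i < m, whose adjacency relation is path_adj; vertex 0 is the
   dominating vertex c. *)
definition path_adj :: "nat \<Rightarrow> nat \<Rightarrow> bool" where
  "path_adj u v \<longleftrightarrow> (v = Suc u \<and> u mod 5 \<noteq> 0) \<or> (u = Suc v \<and> v mod 5 \<noteq> 0)"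

definition path_edges :: "nat \<Rightarrow> nat set set" where
  "path_edges m = (\<lambda>x. {x, Suc x}) ` {x. x < 5*m \<and> x mod 5 \<noteq> 0}"

definition co_paths_vertices :: "nat \<Rightarrow> nat set" where
  "co_paths_vertices m = {..5*m}"

definition co_paths_edges :: "nat \<Rightarrow> nat set set" where
  "co_paths_edges m = {e. e \<subseteq> co_paths_vertices m \<and> card e = 2} - path_edges m"

definition co_paths_basis :: "nat \<Rightarrow> nat set" where
  "co_paths_basis m = {x. x < 5*m \<and> (x mod 5 = 2 \<or> x mod 5 = 4)}"

lemma path_adj_commute: "path_adj u v = path_adj v u"
  unfolding path_adj_def by auto

lemma path_adj_block:
  "path_adj r (5*i+1) \<longleftrightarrow> r = 5*i+2"
  "path_adj r (5*i+2) \<longleftrightarrow> r = 5*i+1 \<or> r = 5*i+3"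
  "path_adj r (5*i+3) \<longleftrightarrow> r = 5*i+2 \<or> r = 5*i+4"
  "path_adj r (5*i+4) \<longleftrightarrow> r = 5*i+3 \<or> r = 5*i+5"
  "path_adj r (5*i+5) \<longleftrightarrow> r = 5*i+4"
  "\<not> path_adj r 0"
  by (unfold path_adj_def; presburger)+

lemma finite_co_paths_vertices: "finite (co_paths_vertices m)"
  by (simp add: co_paths_vertices_def)

lemma co_paths_edge_iff:
  assumes "u \<in> co_paths_vertices m" "v \<in> co_paths_vertices m"
  shows "{u,v} \<in> co_paths_edges m \<longleftrightarrow> u \<noteq> v \<and> \<not> path_adj u v"
proof -
  have "{u,v} \<in> path_edges m \<longleftrightarrow> path_adj u v"
    using assms unfolding path_edges_def path_adj_def co_paths_vertices_def
    by (auto simp: doubleton_eq_iff)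
  moreover have "card {u,v} = 2 \<longleftrightarrow> u \<noteq> v"
    by (cases "u = v") auto
  ultimately show ?thesis
    using assms unfolding co_paths_edges_def by auto
qed

lemma zero_in_co_paths_vertices: "0 \<in> co_paths_vertices m"
  by (simp add: co_paths_vertices_def)

lemma co_paths_dominating_vertex:
  assumes "v \<in> co_paths_vertices m" "v \<noteq> 0"
  shows "{0,v} \<in> co_paths_edges m"
  using assms
  by (simp add: co_paths_edge_iff[OF zero_in_co_paths_vertices] path_adj_commute[of 0] path_adj_block)

lemma simple_graph_co_paths: "simple_graph (co_paths_vertices m) (co_paths_edges m)"
  unfolding simple_graph_def co_paths_edges_def co_paths_vertices_def by auto

lemma connected_graph_co_paths: "connected_graph (co_paths_vertices m) (co_paths_edges m)"
  by (rule connected_graph_dominating_vertex[OF zero_in_co_paths_vertices co_paths_dominating_vertex])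

lemma resolving_set_co_paths_iff:
  "resolving_set (co_paths_vertices m) (co_paths_edges m) R \<longleftrightarrow> R \<subseteq> co_paths_vertices m \<and>
     (\<forall>x\<in>co_paths_vertices m. \<forall>y\<in>co_paths_vertices m. x \<noteq> y \<longrightarrow>
        (\<exists>r\<in>R. r = x \<or> r = y \<or> path_adj r x \<noteq> path_adj r y))"
  (is "_ \<longleftrightarrow> ?adj")
proof -
  have "resolving_set (co_paths_vertices m) (co_paths_edges m) R \<longleftrightarrow> R \<subseteq> co_paths_vertices m \<and>
     (\<forall>x\<in>co_paths_vertices m. \<forall>y\<in>co_paths_vertices m. x \<noteq> y \<longrightarrow>
        (\<exists>r\<in>R. r = x \<or> r = y \<or> ({r,x} \<in> co_paths_edges m) \<noteq> ({r,y} \<in> co_paths_edges m)))"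
    by (rule resolving_set_dominating_vertex[OF zero_in_co_paths_vertices co_paths_dominating_vertex])
  also have "\<dots> \<longleftrightarrow> ?adj"
  proof (intro conj_cong refl ball_cong imp_cong bex_cong)
    fix x y r
    assume "R \<subseteq> co_paths_vertices m" "x \<in> co_paths_vertices m" "y \<in> co_paths_vertices m" "r \<in> R"
    then show "(r = x \<or> r = y \<or> ({r,x} \<in> co_paths_edges m) \<noteq> ({r,y} \<in> co_paths_edges m)) \<longleftrightarrow>
        (r = x \<or> r = y \<or> path_adj r x \<noteq> path_adj r y)"
      by (auto simp: co_paths_edge_iff)
  qed
  finally show ?thesis .
qed

lemma co_paths_basis_iff: "x \<in> co_paths_basis m \<longleftrightarrow> (\<exists>q<m. x = 5*q+2 \<or> x = 5*q+4)"
proof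
  assume "x \<in> co_paths_basis m"
  then have "x < 5*m" "x mod 5 = 2 \<or> x mod 5 = 4"
    by (simp_all add: co_paths_basis_def)
  moreover have "x = 5 * (x div 5) + x mod 5"
    by simp
  ultimately show "\<exists>q<m. x = 5*q+2 \<or> x = 5*q+4"
    by (intro exI[of _ "x div 5"]) arith
next
  assume "\<exists>q<m. x = 5*q+2 \<or> x = 5*q+4"
  then obtain q where "q < m" "x = 5*q+2 \<or> x = 5*q+4"
    by blast
  moreover have "(5*q+2) mod 5 = 2" "(5*q+4) mod 5 = 4"
    by (subst mod_mult_self4; simp)+
  ultimately show "x \<in> co_paths_basis m"
    unfolding co_paths_basis_def by auto
qed

lemma co_paths_basis_separates:
  assumes "x \<in> co_paths_vertices m" "x \<notin> co_paths_basis m" "x \<noteq> 0" "x \<noteq> y"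
  shows "\<exists>r\<in>co_paths_basis m. path_adj r x \<noteq> path_adj r y"
proof -
  define q j where "q = (x - 1) div 5" and "j = (x - 1) mod 5"
  have "x - 1 = 5*q + j"
    unfolding q_def j_def by simp
  then have x_eq: "x = 5*q + j + 1"
    using \<open>x \<noteq> 0\<close> by linarith
  moreover have "j < 5" "x \<le> 5*m"
    using assms(1) by (simp_all add: j_def co_paths_vertices_def)
  ultimately have "q < m"
    by linarith
  then have "j \<noteq> 1" "j \<noteq> 3"
    using assms(2) x_eq by (auto simp: co_paths_basis_iff)
  then have x: "x = 5*q+1 \<or> x = 5*q+3 \<or> x = 5*q+5"
    using x_eq \<open>j < 5\<close> by auto
  have "5*q+2 \<in> co_paths_basis m" "5*q+4 \<in> co_paths_basis m"
    using \<open>q < m\<close> unfolding co_paths_basis_iff by blast+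
  moreover have "\<exists>r\<in>{5*q+2, 5*q+4}. path_adj r x \<noteq> path_adj r y"
    using x \<open>x \<noteq> y\<close>
    by (elim disjE; hypsubst; unfold bex_simps path_adj_commute[of _ y] path_adj_block; auto)
  ultimately show ?thesis
    by auto
qed

lemma resolving_set_co_paths_basis:
  "resolving_set (co_paths_vertices m) (co_paths_edges m) (co_paths_basis m)"
  unfolding resolving_set_co_paths_iff
proof (intro conjI ballI impI)
  show "co_paths_basis m \<subseteq> co_paths_vertices m"
    by (auto simp: co_paths_basis_def co_paths_vertices_def)
  fix x y assume xy: "x \<in> co_paths_vertices m" "y \<in> co_paths_vertices m" "x \<noteq> y"
  consider "x \<in> co_paths_basis m \<or> y \<in> co_paths_basis m"
    | "x \<notin> co_paths_basis m" "x \<noteq> 0" | "y \<notin> co_paths_basis m" "y \<noteq> 0"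
    using xy by auto
  then show "\<exists>r\<in>co_paths_basis m. r = x \<or> r = y \<or> path_adj r x \<noteq> path_adj r y"
  proof cases
    case 1
    then show ?thesis by blast
  next
    case 2
    then show ?thesis
      using co_paths_basis_separates[of x m y] xy by blast
  next
    case 3
    then show ?thesis
      using co_paths_basis_separates[of y m x] xy by fastforce
  qed
qed

(* Writing a_j = 5i+j, each set consists of x, y and the vertices path-adjacent to exactly one of
   them, for (x, y) = (a1,a2), (a1,a3), (a1,a5), (a3,a5), (a4,a5), (0,a1), (0,a3), (0,a5). *)
lemma resolving_set_co_paths_hits_block:
  assumes res: "resolving_set (co_paths_vertices m) (co_paths_edges m) R" and "i < m"
  shows "R \<inter> {5*i+1, 5*i+2, 5*i+3} \<noteq> {}"
    and "R \<inter> {5*i+1, 5*i+3, 5*i+4} \<noteq> {}"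
    and "R \<inter> {5*i+1, 5*i+2, 5*i+4, 5*i+5} \<noteq> {}"
    and "R \<inter> {5*i+2, 5*i+3, 5*i+5} \<noteq> {}"
    and "R \<inter> {5*i+3, 5*i+4, 5*i+5} \<noteq> {}"
    and "R \<inter> {0, 5*i+1, 5*i+2} \<noteq> {}"
    and "R \<inter> {0, 5*i+2, 5*i+3, 5*i+4} \<noteq> {}"
    and "R \<inter> {0, 5*i+4, 5*i+5} \<noteq> {}"
proof -
  have block: "{0, 5*i+1, 5*i+2, 5*i+3, 5*i+4, 5*i+5} \<subseteq> co_paths_vertices m"
    using \<open>i < m\<close> by (auto simp: co_paths_vertices_def)
  have sep: "\<exists>r\<in>R. r = x \<or> r = y \<or> path_adj r x \<noteq> path_adj r y"
    if "x \<in> co_paths_vertices m" "y \<in> co_paths_vertices m" "x \<noteq> y" for x y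
    using res that unfolding resolving_set_co_paths_iff by blast
  show "R \<inter> {5*i+1, 5*i+2, 5*i+3} \<noteq> {}"
    using sep[of "5*i+1" "5*i+2"] block unfolding path_adj_block by auto
  show "R \<inter> {5*i+1, 5*i+3, 5*i+4} \<noteq> {}"
    using sep[of "5*i+1" "5*i+3"] block unfolding path_adj_block by auto
  show "R \<inter> {5*i+1, 5*i+2, 5*i+4, 5*i+5} \<noteq> {}"
    using sep[of "5*i+1" "5*i+5"] block unfolding path_adj_block by auto
  show "R \<inter> {5*i+2, 5*i+3, 5*i+5} \<noteq> {}"
    using sep[of "5*i+3" "5*i+5"] block unfolding path_adj_block by auto
  show "R \<inter> {5*i+3, 5*i+4, 5*i+5} \<noteq> {}"
    using sep[of "5*i+4" "5*i+5"] block unfolding path_adj_block by auto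
  show "R \<inter> {0, 5*i+1, 5*i+2} \<noteq> {}"
    using sep[of 0 "5*i+1"] block unfolding path_adj_block by (auto simp: path_adj_block(6))
  show "R \<inter> {0, 5*i+2, 5*i+3, 5*i+4} \<noteq> {}"
    using sep[of 0 "5*i+3"] block unfolding path_adj_block by (auto simp: path_adj_block(6))
  show "R \<inter> {0, 5*i+4, 5*i+5} \<noteq> {}"
    using sep[of 0 "5*i+5"] block unfolding path_adj_block by (auto simp: path_adj_block(6))
qed

lemma five_bools_hitting_two_le:
  fixes a b c d e :: bool
  assumes "a \<or> b \<or> c" "a \<or> c \<or> d" "a \<or> b \<or> d \<or> e" "b \<or> c \<or> e" "c \<or> d \<or> e"
  shows "2 \<le> (of_bool a + of_bool b + of_bool c + of_bool d + of_bool e :: nat)"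
  using assms by (cases a; cases b; cases c; cases d; cases e) simp_all

lemma five_bools_hitting_two_imp:
  fixes a b c d e :: bool
  assumes "a \<or> b \<or> c" "a \<or> c \<or> d" "a \<or> b \<or> d \<or> e" "b \<or> c \<or> e" "c \<or> d \<or> e"
    and "a \<or> b" "b \<or> c \<or> d" "d \<or> e"
    and "(of_bool a + of_bool b + of_bool c + of_bool d + of_bool e :: nat) \<le> 2"
  shows "b \<and> d"
  using assms by (cases a; cases b; cases c; cases d; cases e) simp_all

lemma card_Int_block:
  fixes i :: nat
  shows "card (R \<inter> {5*i+1..5*i+5}) = of_bool (5*i+1 \<in> R) + of_bool (5*i+2 \<in> R) + of_bool (5*i+3 \<in> R)
     + of_bool (5*i+4 \<in> R) + of_bool (5*i+5 \<in> R)"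
proof -
  have "{5*i+1..5*i+5} = {5*i+1, 5*i+2, 5*i+3, 5*i+4, 5*i+5}"
    by auto
  then show ?thesis
    by (simp add: Int_insert_right card_insert_if)
qed

lemma resolving_set_co_paths_block_card:
  assumes "resolving_set (co_paths_vertices m) (co_paths_edges m) R" "i < m"
  shows "2 \<le> card (R \<inter> {5*i+1..5*i+5})"
  unfolding card_Int_block
  by (rule five_bools_hitting_two_le) (use resolving_set_co_paths_hits_block[OF assms] in blast)+

lemma resolving_set_co_paths_block_basis:
  assumes "resolving_set (co_paths_vertices m) (co_paths_edges m) R" "i < m"
    and "0 \<notin> R" "card (R \<inter> {5*i+1..5*i+5}) \<le> 2"
  shows "5*i+2 \<in> R \<and> 5*i+4 \<in> R"
proof (rule five_bools_hitting_two_imp)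
  show "of_bool (5*i+1 \<in> R) + of_bool (5*i+2 \<in> R) + of_bool (5*i+3 \<in> R)
     + of_bool (5*i+4 \<in> R) + of_bool (5*i+5 \<in> R) \<le> (2::nat)"
    using assms(4) unfolding card_Int_block .
qed (use resolving_set_co_paths_hits_block[OF assms(1,2)] assms(3) in blast)+

lemma resolving_set_co_paths_card_ge:
  assumes "resolving_set (co_paths_vertices m) (co_paths_edges m) R"
  shows "2*m \<le> card (R \<inter> {1..5*m})"
proof -
  have "2*m = (\<Sum>i<m. 2)"
    by simp
  also have "\<dots> \<le> (\<Sum>i<m. card (R \<inter> {5*i+1..5*i+5}))"
    using resolving_set_co_paths_block_card[OF assms] by (intro sum_mono) simp
  also have "\<dots> = card (R \<inter> {1..5*m})"
    by (rule card_Int_consecutive_blocks[symmetric])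
  finally show ?thesis .
qed

lemma co_paths_basis_subset_resolving_set:
  assumes res: "resolving_set (co_paths_vertices m) (co_paths_edges m) R" and "card R \<le> 2*m"
  shows "co_paths_basis m \<subseteq> R"
proof -
  have "finite R"
    using finite_co_paths_vertices res by (rule finite_resolving_set)
  have no_zero: "0 \<notin> R"
  proof
    assume "0 \<in> R"
    then have "insert 0 (R \<inter> {1..5*m}) \<subseteq> R"
      by blast
    then have "card (insert 0 (R \<inter> {1..5*m})) \<le> card R"
      using \<open>finite R\<close> by (intro card_mono)
    then show False
      using resolving_set_co_paths_card_ge[OF res] \<open>card R \<le> 2*m\<close> \<open>finite R\<close> by simp
  qed
  have block_le_2: "card (R \<inter> {5*i+1..5*i+5}) \<le> 2" if "i < m" for i
  proof (rule ccontr)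
    assume "\<not> card (R \<inter> {5*i+1..5*i+5}) \<le> 2"
    then have "(\<Sum>i<m. 2) < (\<Sum>i<m. card (R \<inter> {5*i+1..5*i+5}))"
      using resolving_set_co_paths_block_card[OF res] that
      by (intro sum_strict_mono_ex1) (auto intro!: bexI[of _ i])
    also have "\<dots> = card (R \<inter> {1..5*m})"
      by (rule card_Int_consecutive_blocks[symmetric])
    also have "\<dots> \<le> card R"
      using \<open>finite R\<close> by (intro card_mono) auto
    finally show False
      using \<open>card R \<le> 2*m\<close> by simp
  qed
  show ?thesis
    using resolving_set_co_paths_block_basis[OF res _ no_zero block_le_2]
    by (auto simp: co_paths_basis_iff)
qed

lemma card_co_paths_basis: "card (co_paths_basis m) = 2*m"
proof -
  have "{j. j < 5 \<and> (j = 2 \<or> j = (4::nat))} = {2,4}"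
    by auto
  then show ?thesis
    unfolding co_paths_basis_def using card_residues_below[of 5 m "\<lambda>j. j = 2 \<or> j = 4"] by simp
qed

lemma metric_dim_co_paths: "metric_dim (co_paths_vertices m) (co_paths_edges m) = 2*m"
  unfolding metric_dim_def
proof (rule Least_equality)
  show "\<exists>R. resolving_set (co_paths_vertices m) (co_paths_edges m) R \<and> card R = 2*m"
    using resolving_set_co_paths_basis card_co_paths_basis by blast
next
  fix k assume "\<exists>R. resolving_set (co_paths_vertices m) (co_paths_edges m) R \<and> card R = k"
  then obtain R where res: "resolving_set (co_paths_vertices m) (co_paths_edges m) R" and "card R = k"
    by blast
  have "finite R"
    using finite_co_paths_vertices res by (rule finite_resolving_set)
  have "2*m \<le> card (R \<inter> {1..5*m})"
    using res by (rule resolving_set_co_paths_card_ge)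
  also have "\<dots> \<le> card R"
    using \<open>finite R\<close> by (intro card_mono) auto
  finally show "2*m \<le> k"
    using \<open>card R = k\<close> by simp
qed

lemma metric_basis_co_paths_iff:
  "metric_basis (co_paths_vertices m) (co_paths_edges m) R \<longleftrightarrow> R = co_paths_basis m"
proof
  assume "metric_basis (co_paths_vertices m) (co_paths_edges m) R"
  then have res: "resolving_set (co_paths_vertices m) (co_paths_edges m) R" and "card R = 2*m"
    by (auto simp: metric_basis_def metric_dim_co_paths)
  moreover have "finite R"
    using finite_co_paths_vertices res by (rule finite_resolving_set)
  ultimately show "R = co_paths_basis m"
    using card_subset_eq[OF _ co_paths_basis_subset_resolving_set[OF res]] card_co_paths_basis
    by simp
next
  assume "R = co_paths_basis m"
  then show "metric_basis (co_paths_vertices m) (co_paths_edges m) R"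
    by (simp add: metric_basis_def metric_dim_co_paths resolving_set_co_paths_basis card_co_paths_basis)
qed

lemma card_path_edges: "card (path_edges m) = 4*m"
proof -
  have "card (path_edges m) = card {x::nat. x < 5*m \<and> x mod 5 \<noteq> 0}"
    unfolding path_edges_def by (rule card_image) (auto simp: inj_on_def doubleton_eq_iff)
  also have "\<dots> = m * card {j::nat. j < 5 \<and> j \<noteq> 0}"
    by (rule card_residues_below)
  also have "{j::nat. j < 5 \<and> j \<noteq> 0} = {1,2,3,4}"
    by auto
  finally show ?thesis
    by simp
qed

lemma card_co_paths_edges:
  "2 * card (co_paths_edges m) + 8*m = card (co_paths_vertices m) * (card (co_paths_vertices m) - 1)"
proof -
  let ?n = "card (co_paths_vertices m)"
  let ?pairs = "{e. e \<subseteq> co_paths_vertices m \<and> card e = 2}"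
  note fin = finite_co_paths_vertices[of m]
  have sub: "path_edges m \<subseteq> ?pairs"
    unfolding path_edges_def co_paths_vertices_def by auto
  have "finite ?pairs"
    using fin by (auto intro: finite_subset[of _ "Pow (co_paths_vertices m)"])
  then have "card (co_paths_edges m) + card (path_edges m) = card ?pairs"
    unfolding co_paths_edges_def
    using card_Diff_subset[OF finite_subset[OF sub] sub] card_mono[OF _ sub] by simp
  moreover have "card ?pairs = ?n choose 2"
    using n_subsets[OF fin] by simp
  moreover have "2 * (?n choose 2) = ?n * (?n - 1)"
  proof -
    have "even (?n * (?n - 1))"
      by (cases "even ?n") auto
    then show ?thesis
      by (simp add: choose_two)
  qed
  ultimately show ?thesis
    using card_path_edges by simp
qed

theorem corollary3:
  fixes k :: nat
  assumes "even k" and "k > 0"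
  shows "\<exists>(V :: nat set) (E :: nat set set).
           simple_graph V E \<and> connected_graph V E \<and>
           card {v \<in> V. basis_forced V E v} = k \<and>
           2 * card E + 4 * k = card V * (card V - 1)"
proof -
  obtain m where k: "k = 2*m"
    using \<open>even k\<close> by blast
  have "{v \<in> co_paths_vertices m. basis_forced (co_paths_vertices m) (co_paths_edges m) v} = co_paths_basis m"
    unfolding basis_forced_def metric_basis_co_paths_iff
    by (auto simp: co_paths_basis_def co_paths_vertices_def)
  then show ?thesis
    using simple_graph_co_paths connected_graph_co_paths card_co_paths_basis card_co_paths_edges
    by (intro exI[of _ "co_paths_vertices m"] exI[of _ "co_paths_edges m"]) (simp add: k)
qed

end
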